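(* Let $m\ge 2$ and let $n$ satisfy $2^m\le n<2^m+2^{m-1}-1$. Put $e=n-2^m+1$. Then every $f\in\mathbf{SB}_n$ satisfies $\mathcal{AI}(f)\le 2^{m-1}-1$ or $\deg(\sigma_e f)=2^{m-1}+e$.
   Context: $\mathbf{SB}_n$ is the set of symmetric Boolean functions on $n$ variables; $\sigma_e$ is the $e$-th elementary symmetric function of $x_1,\dots,x_n$ over $\mathbb{F}_2$; $\deg$ is the algebraic degree. The algebraic immunity of $f$ is $\mathcal{AI}(f)=\min\{\deg(g): g\neq0,\ gf=0 \text{ or } g(f+1)=0\}$. *)

theory Defs
  imports Main
begin

text \<open>A Boolean function on n variables x_0,...,x_{n-1} is modelled as a predicate on
  subsets of {..<n}: the input vector x is identified with its support {i. x_i = 1}.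
  Only the values on subsets of {..<n} are relevant.\<close>

type_synonym bfun = "nat set \<Rightarrow> bool"

definition symmetric_bf :: "nat \<Rightarrow> bfun \<Rightarrow> bool" where
  "symmetric_bf n f \<longleftrightarrow>
     (\<forall>A B. A \<subseteq> {..<n} \<longrightarrow> B \<subseteq> {..<n} \<longrightarrow> card A = card B \<longrightarrow> f A = f B)"

definition esym :: "nat \<Rightarrow> bfun" where
  "esym e x \<longleftrightarrow> odd (card x choose e)"

definition anf_coeff :: "bfun \<Rightarrow> nat set \<Rightarrow> bool" where
  "anf_coeff f S \<longleftrightarrow> odd (card {u. u \<subseteq> S \<and> f u})"

text \<open>Algebraic degree (the zero function gets degree 0).\<close>
definition alg_deg :: "nat \<Rightarrow> bfun \<Rightarrow> nat" where
  "alg_deg n f = Max (insert 0 {card S | S. S \<subseteq> {..<n} \<and> anf_coeff f S})"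

definition nonzero_bf :: "nat \<Rightarrow> bfun \<Rightarrow> bool" where
  "nonzero_bf n g \<longleftrightarrow> (\<exists>x \<subseteq> {..<n}. g x)"

definition annihilates :: "nat \<Rightarrow> bfun \<Rightarrow> bfun \<Rightarrow> bool" where
  "annihilates n g f \<longleftrightarrow> (\<forall>x \<subseteq> {..<n}. \<not> (g x \<and> f x))"

definition alg_immunity :: "nat \<Rightarrow> bfun \<Rightarrow> nat" where
  "alg_immunity n f = (LEAST d. \<exists>g. nonzero_bf n g \<and>
      (annihilates n g f \<or> annihilates n g (\<lambda>x. \<not> f x)) \<and> alg_deg n g = d)"

end

theory Submission imports Defs "HOL-Library.Z2"
begin

(*
  Proof idea.  Put k = 2^(m-1), so that 2^m = 2k, n = 2k + e - 1 and 1 <= e < k.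
  A symmetric f is determined by its weight profile v(w) = f(x) for |x| = w.

  * If v(w) = v(w+k) for some e <= w < k, then g(x) = [|x| mod k = w] is nonzero,
    takes the value 1 only on weights w and w+k (all weights are below 2k+e <= w+2k),
    hence annihilates f or f+1; by Lucas' theorem deg g <= k-1, so AI(f) <= k-1.
  * Otherwise v(w) <> v(w+k) for all e <= w < k, and the ANF coefficients of the
    symmetric function sigma_e f can be computed mod 2 by binomial sums: they vanish
    above weight k+e and the coefficient of weight k+e is 1, so deg(sigma_e f) = k+e.
*)

text \<open>Arithmetic happens in GF(2) = bit; keep its sum and product as ring operations
  instead of letting the simplifier turn them into xor and conjunction.\<close>
declare add_bit_eq_xor[simp del] mult_bit_eq_and[simp del]

section \<open>Binomial coefficients modulo 2\<close>

lemma bit_add_self [simp]: "(x::bit) + x = 0"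
  by (cases x) (simp_all flip: one_add_one)

lemma of_nat_bit: "(of_nat n :: bit) = of_bool (odd n)"
  by (induction n) (auto simp: add.commute)

text \<open>Vandermonde's identity modulo 2, for a K whose interior binomial coefficients are even:
  then (1+X)^K = 1 + X^K over GF(2), so multiplying by (1+X)^q shifts coefficients by K.\<close>
lemma choose_add_mod2_gen:
  assumes even_K: "\<And>i. 0 < i \<Longrightarrow> i < K \<Longrightarrow> even (K choose i)" and K_pos: "0 < K"
  shows "(of_nat ((K + q) choose j) :: bit)
           = of_nat (q choose j) + (if K \<le> j then of_nat (q choose (j - K)) else 0)"
proof -
  define g where "g = (\<lambda>i. (of_nat ((K choose i) * (q choose (j - i))) :: bit))"
  have "(of_nat ((K + q) choose j)::bit) = (\<Sum>i\<le>j. g i)"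
    by (simp add: g_def flip: vandermonde)
  also have "\<dots> = (\<Sum>i\<in>{0} \<union> (if K \<le> j then {K} else {}). g i)"
  proof (rule sum.mono_neutral_right)
    show "\<forall>i\<in>{..j} - ({0} \<union> (if K \<le> j then {K} else {})). g i = 0"
    proof
      fix i assume i: "i \<in> {..j} - ({0} \<union> (if K \<le> j then {K} else {}))"
      show "g i = 0"
      proof (cases "i < K")
        case True
        with i have "even (K choose i)" using even_K by (auto split: if_splits)
        thus ?thesis by (simp add: g_def of_nat_bit)
      next
        case False
        with i have "K < i" by (auto split: if_splits)
        thus ?thesis by (simp add: g_def binomial_eq_0)
      qed
    qed
  qed auto
  also have "\<dots> = of_nat (q choose j) + (if K \<le> j then of_nat (q choose (j - K)) else 0)"
    using K_pos by (auto simp: g_def)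
  finally show ?thesis .
qed

lemma even_choose_pow2: "0 < i \<Longrightarrow> i < 2^r \<Longrightarrow> even (2^r choose i)"
proof (induction r arbitrary: i)
  case 0 thus ?case by simp
next
  case (Suc r)
  have "(of_nat ((2^r + 2^r) choose i) :: bit)
          = of_nat (2^r choose i) + (if 2^r \<le> i then of_nat (2^r choose (i - 2^r)) else 0)"
    by (rule choose_add_mod2_gen) (use Suc.IH in auto)
  also have "\<dots> = 0"
  proof -
    consider "i < 2^r" | "i = 2^r" | "2^r < i" by linarith
    thus ?thesis
    proof cases
      case 1 thus ?thesis using Suc by (simp add: of_nat_bit)
    next
      case 3
      moreover have "i - 2^r < 2^r" using Suc.prems by simp
      ultimately show ?thesis using Suc.IH[of "i - 2^r"] by (simp add: of_nat_bit binomial_eq_0)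
    qed simp
  qed
  finally show ?case by (simp add: of_nat_bit mult_2)
qed

lemma choose_add_pow2_mod2:
  "(of_nat ((2^r + q) choose j) :: bit)
     = of_nat (q choose j) + (if 2^r \<le> j then of_nat (q choose (j - 2^r)) else 0)"
  by (rule choose_add_mod2_gen) (auto intro: even_choose_pow2)

section \<open>ANF coefficients of symmetric functions\<close>

text \<open>For a weight predicate P, the parity of the number of subsets of an s-set whose
  weight satisfies P.  This is the ANF coefficient of a symmetric function at any
  monomial of degree s.\<close>
definition parity_transform :: "(nat \<Rightarrow> bool) \<Rightarrow> nat \<Rightarrow> bit" where
  "parity_transform P s = (\<Sum>j\<le>s. if P j then of_nat (s choose j) else 0)"

lemma card_subsets_weight:
  assumes "finite S"
  shows "card {u. u \<subseteq> S \<and> P (card u)} = (\<Sum>j\<le>card S. if P j then card S choose j else 0)"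
proof -
  have split: "{u. u \<subseteq> S \<and> P (card u)}
                 = (\<Union>j\<in>{j\<in>{..card S}. P j}. {u. u \<subseteq> S \<and> card u = j})"
    using assms by (auto intro: card_mono)
  have "card (\<Union>j\<in>{j\<in>{..card S}. P j}. {u. u \<subseteq> S \<and> card u = j})
      = (\<Sum>j\<in>{j\<in>{..card S}. P j}. card {u. u \<subseteq> S \<and> card u = j})"
    by (rule card_UN_disjoint) (use assms in auto)
  also have "\<dots> = (\<Sum>j\<in>{j\<in>{..card S}. P j}. card S choose j)"
    using n_subsets[OF assms] by simp
  also have "\<dots> = (\<Sum>j\<le>card S. if P j then card S choose j else 0)"
    by (rule sum.inter_filter) simp
  finally show ?thesis using split by simp
qed

lemma anf_coeff_weight_fun:
  assumes "finite S" and "\<And>u. u \<subseteq> S \<Longrightarrow> h u = P (card u)"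
  shows "anf_coeff h S \<longleftrightarrow> parity_transform P (card S) = 1"
proof -
  have "{u. u \<subseteq> S \<and> h u} = {u. u \<subseteq> S \<and> P (card u)}" using assms(2) by auto
  hence "anf_coeff h S \<longleftrightarrow> odd (\<Sum>j\<le>card S. if P j then card S choose j else 0)"
    unfolding anf_coeff_def using card_subsets_weight[OF assms(1)] by simp
  also have "\<dots> \<longleftrightarrow> (of_nat (\<Sum>j\<le>card S. if P j then card S choose j else 0) :: bit) = 1"
    by (simp add: of_nat_bit)
  also have "(of_nat (\<Sum>j\<le>card S. if P j then card S choose j else 0) :: bit) = parity_transform P (card S)"
    by (simp add: parity_transform_def of_nat_sum if_distrib cong: if_cong)
  finally show ?thesis .
qed

lemma parity_transform_add_pow2:
  "parity_transform P (2^r + q) = parity_transform P q + parity_transform (\<lambda>j. P (j + 2^r)) q"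
proof -
  let ?K = "2^r::nat"
  have "parity_transform P (?K + q) =
        (\<Sum>j\<le>?K + q. (if P j then of_nat (q choose j) else 0)
                      + (if P j \<and> ?K \<le> j then of_nat (q choose (j - ?K)) else 0))"
    unfolding parity_transform_def by (rule sum.cong) (auto simp: choose_add_pow2_mod2)
  also have "\<dots> = (\<Sum>j\<le>?K + q. if P j then (of_nat (q choose j)::bit) else 0)
                  + (\<Sum>j\<le>?K + q. if P j \<and> ?K \<le> j then of_nat (q choose (j - ?K)) else 0)"
    by (rule sum.distrib)
  also have "(\<Sum>j\<le>?K + q. if P j then (of_nat (q choose j)::bit) else 0) = parity_transform P q"
    unfolding parity_transform_def by (rule sum.mono_neutral_right) (auto simp: binomial_eq_0)
  also have "(\<Sum>j\<le>?K + q. if P j \<and> ?K \<le> j then (of_nat (q choose (j - ?K))::bit) else 0)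
           = (\<Sum>j\<in>{0+?K..q+?K}. if P j then of_nat (q choose (j - ?K)) else 0)"
    by (rule sum.mono_neutral_cong_right) auto
  also have "\<dots> = parity_transform (\<lambda>j. P (j + 2^r)) q"
    unfolding parity_transform_def sum.shift_bounds_cl_nat_ivl
    by (simp add: atLeast0AtMost cong: if_cong)
  finally show ?thesis .
qed

text \<open>Multiplying by sigma_e: the identity (s choose j)(j choose e) = (s choose e)(s-e choose j-e)
  factors the transform of sigma_e v.\<close>
lemma parity_transform_esym:
  assumes "e \<le> s"
  shows "parity_transform (\<lambda>j. odd (j choose e) \<and> v j) s
           = of_nat (s choose e) * parity_transform (\<lambda>i. v (i + e)) (s - e)"
proof -
  have "parity_transform (\<lambda>j. odd (j choose e) \<and> v j) s
      = (\<Sum>j\<le>s. if v j then of_nat ((s choose j) * (j choose e)) else 0)"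
    unfolding parity_transform_def by (rule sum.cong) (auto simp: of_nat_bit)
  also have "\<dots> = (\<Sum>j\<in>{e..s}. if v j then of_nat ((s choose e) * ((s - e) choose (j - e))) else 0)"
    by (rule sum.mono_neutral_cong_right) (auto simp: binomial_eq_0 choose_mult)
  also have "\<dots> = (\<Sum>j\<in>{0+e..(s-e)+e}. if v j then of_nat ((s choose e) * ((s - e) choose (j - e))) else 0)"
    using assms by simp
  also have "\<dots> = (\<Sum>i\<in>{0..s-e}. if v (i + e) then of_nat ((s choose e) * ((s - e) choose i)) else 0)"
    by (simp only: sum.shift_bounds_cl_nat_ivl) (simp cong: if_cong)
  also have "\<dots> = of_nat (s choose e) * parity_transform (\<lambda>i. v (i + e)) (s - e)"
    by (simp add: parity_transform_def sum_distrib_left atLeast0AtMost if_distrib cong: if_cong)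
  finally show ?thesis .
qed

section \<open>Degree and algebraic immunity\<close>

lemma alg_deg_le:
  assumes "\<And>S. S \<subseteq> {..<n} \<Longrightarrow> anf_coeff g S \<Longrightarrow> card S \<le> d"
  shows "alg_deg n g \<le> d"
proof -
  have "finite (insert 0 {card S | S. S \<subseteq> {..<n} \<and> anf_coeff g S})"
    by (rule finite_subset[of _ "{..n}"]) (auto dest: card_mono[of "{..<n}", simplified])
  thus ?thesis unfolding alg_deg_def using assms by (auto simp: Max_le_iff)
qed

lemma card_le_alg_deg:
  assumes "S \<subseteq> {..<n}" and "anf_coeff g S"
  shows "card S \<le> alg_deg n g"
proof -
  have "finite (insert 0 {card S | S. S \<subseteq> {..<n} \<and> anf_coeff g S})"
    by (rule finite_subset[of _ "{..n}"]) (auto dest: card_mono[of "{..<n}", simplified])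
  thus ?thesis unfolding alg_deg_def using assms by (auto intro: Max_ge)
qed

lemma alg_immunity_le_deg:
  assumes "nonzero_bf n g" and "annihilates n g f \<or> annihilates n g (\<lambda>x. \<not> f x)"
  shows "alg_immunity n f \<le> alg_deg n g"
  unfolding alg_immunity_def by (rule Least_le) (use assms in blast)

lemma symmetric_bf_weight:
  assumes "symmetric_bf n f" and "x \<subseteq> {..<n}"
  shows "f x = f {..<card x}"
proof -
  have "card x \<le> n" using card_mono[OF _ assms(2)] by simp
  thus ?thesis
    using assms(1)[unfolded symmetric_bf_def, rule_format, of x "{..<card x}"] assms(2) by simp
qed

section \<open>First case: a low-degree annihilator\<close>

lemma alg_deg_weight_class:
  assumes "w < 2^r"
  shows "alg_deg n (\<lambda>x. card x mod 2^r = w) \<le> 2^r - 1"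
proof (rule alg_deg_le)
  fix S assume S: "S \<subseteq> {..<n}" "anf_coeff (\<lambda>x. card x mod 2^r = w) S"
  show "card S \<le> 2^r - 1"
  proof (rule ccontr)
    assume "\<not> card S \<le> 2^r - 1"
    moreover have "(0::nat) < 2^r" by simp
    ultimately have "2^r \<le> card S" by linarith
    then obtain q where q: "card S = 2^r + q" using le_add_diff_inverse by metis
    have "parity_transform (\<lambda>j. j mod 2^r = w) (2^r + q) = 0"
      by (simp add: parity_transform_add_pow2)
    moreover have "finite S" using S(1) finite_subset by blast
    ultimately show False using anf_coeff_weight_fun[of S _ "\<lambda>j. j mod 2^r = w"] S(2) q by simp
  qed
qed

text \<open>If the profile of f agrees at weights w and w + k with k = 2^r, and no weight
  reaches w + 2k, the weight class of w modulo k gives an annihilator of degree < k.\<close>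
lemma alg_immunity_le_if_profile_repeats:
  assumes sym: "symmetric_bf n f" and w: "w < 2^r" "w \<le> n" "n < w + 2 * 2^r"
    and repeat: "f {..<w} = f {..<w + 2^r}"
  shows "alg_immunity n f \<le> 2^r - 1"
proof -
  define k :: nat where "k = 2^r"
  define g where "g = (\<lambda>x::nat set. card x mod k = w)"
  have "nonzero_bf n g" unfolding nonzero_bf_def g_def k_def
    by (rule exI[of _ "{..<w}"]) (use w in auto)
  moreover have "f x = f {..<w}" if x: "x \<subseteq> {..<n}" "g x" for x
  proof -
    have decomp: "card x = w + k * (card x div k)"
      using x(2) unfolding g_def by (metis mod_mult_div_eq)
    moreover have "card x \<le> n" using card_mono[OF _ x(1)] by simp
    moreover have "card x div k \<ge> 2 \<Longrightarrow> k * 2 \<le> k * (card x div k)" by simp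
    ultimately have "card x div k < 2" using w unfolding k_def by linarith
    hence "card x = w \<or> card x = w + k" using decomp by (auto simp: less_2_cases_iff)
    thus ?thesis using symmetric_bf_weight[OF sym x(1)] repeat unfolding k_def by auto
  qed
  hence "annihilates n g f \<or> annihilates n g (\<lambda>x. \<not> f x)"
    unfolding annihilates_def by (cases "f {..<w}") auto
  ultimately have "alg_immunity n f \<le> alg_deg n g" by (rule alg_immunity_le_deg)
  also have "\<dots> \<le> 2^r - 1" unfolding g_def k_def by (rule alg_deg_weight_class[OF w(1)])
  finally show ?thesis .
qed

section \<open>Second case: the degree of sigma_e f\<close>

lemma parity_transform_alternating_profile:
  assumes alt: "\<And>w. e \<le> w \<Longrightarrow> w < 2^r \<Longrightarrow> v w \<noteq> v (w + 2^r)"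
    and t: "t + e < 2^r"
  shows "parity_transform (\<lambda>i. v (i + e)) (2^r + t) = of_bool (t = 0)"
proof -
  have "parity_transform (\<lambda>i. v (i + e)) (2^r + t)
          = (\<Sum>i\<le>t. (if v (i + e) then of_nat (t choose i) else 0)
                       + (if v (i + e + 2^r) then of_nat (t choose i) else 0))"
    unfolding parity_transform_add_pow2
    by (simp add: parity_transform_def sum.distrib add.assoc add.commute[of e])
  also have "\<dots> = (\<Sum>i\<le>t. (of_nat (t choose i) :: bit))"
  proof (rule sum.cong)
    fix i assume "i \<in> {..t}"
    hence "v (i + e) \<noteq> v (i + e + 2^r)" using alt[of "i + e"] t by auto
    thus "(if v (i + e) then of_nat (t choose i) else 0)
            + (if v (i + e + 2^r) then of_nat (t choose i) else 0) = (of_nat (t choose i) :: bit)"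
      by auto
  qed simp
  also have "\<dots> = of_nat (2^t)" by (simp flip: of_nat_sum add: choose_row_sum)
  also have "\<dots> = of_bool (t = 0)" by (simp add: of_nat_bit)
  finally show ?thesis .
qed

lemma anf_coeff_esym_symmetric:
  assumes sym: "symmetric_bf n f" and S: "S \<subseteq> {..<n}" "e \<le> card S"
  shows "anf_coeff (\<lambda>x. esym e x \<and> f x) S \<longleftrightarrow>
    of_nat (card S choose e) * parity_transform (\<lambda>i. f {..<i + e}) (card S - e) = 1"
proof -
  have "anf_coeff (\<lambda>x. esym e x \<and> f x) S
          \<longleftrightarrow> parity_transform (\<lambda>j. odd (j choose e) \<and> f {..<j}) (card S) = 1"
  proof (rule anf_coeff_weight_fun)
    show "finite S" using S finite_subset by blast
    fix u assume "u \<subseteq> S"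
    thus "(esym e u \<and> f u) = (odd (card u choose e) \<and> f {..<card u})"
      using symmetric_bf_weight[OF sym, of u] S unfolding esym_def by auto
  qed
  thus ?thesis by (simp add: parity_transform_esym[OF S(2)])
qed

lemma alg_deg_esym_alternating:
  assumes sym: "symmetric_bf n f" and k: "k = 2^r" and e: "e < k" and n: "n = 2 * k + e - 1"
    and alt: "\<And>w. e \<le> w \<Longrightarrow> w < k \<Longrightarrow> f {..<w} \<noteq> f {..<w + k}"
  shows "alg_deg n (\<lambda>x. esym e x \<and> f x) = k + e"
proof -
  let ?h = "\<lambda>x. esym e x \<and> f x" and ?T = "parity_transform (\<lambda>i. f {..<i + e})"
  have transform: "?T (k + t) = of_bool (t = 0)" if "t + e < k" for t
    using parity_transform_alternating_profile[of e r "\<lambda>j. f {..<j}" t] alt that k by auto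
  have "card S \<le> k + e" if S: "S \<subseteq> {..<n}" "anf_coeff ?h S" for S
  proof (rule ccontr)
    assume gt: "\<not> card S \<le> k + e"
    have "card S \<le> n" using card_mono[OF _ S(1)] by simp
    have "of_nat (card S choose e) * ?T (card S - e) = (0::bit)"
    proof (cases "card S < 2 * k")
      case True
      hence "card S - e = k + (card S - e - k)" "card S - e - k + e < k" "card S - e - k \<noteq> 0"
        using gt by auto
      thus ?thesis using transform[of "card S - e - k"] by simp
    next
      case False
      define q where "q = card S - 2 * k"
      have card_S: "card S = 2^Suc r + q" using False k by (simp add: q_def)
      have "q < e" using \<open>card S \<le> n\<close> n e False unfolding q_def by arith
      have "(of_nat (card S choose e) :: bit) = of_nat (q choose e)"
        unfolding card_S choose_add_pow2_mod2 using e k by simp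
      also have "\<dots> = 0" using \<open>q < e\<close> by (simp add: binomial_eq_0)
      finally show ?thesis by simp
    qed
    moreover have "of_nat (card S choose e) * ?T (card S - e) = (1::bit)"
      using anf_coeff_esym_symmetric[OF sym S(1)] S(2) gt by simp
    ultimately show False by (metis zero_neq_one)
  qed
  moreover have top: "{..<k + e} \<subseteq> {..<n}" using n e k by auto
  moreover have "anf_coeff ?h {..<k + e}"
  proof -
    have "(of_nat ((2^r + e) choose e) :: bit) = 1" using e k by (simp add: choose_add_pow2_mod2)
    thus ?thesis using anf_coeff_esym_symmetric[OF sym top] transform[of 0] e k by simp
  qed
  ultimately show ?thesis
    using card_le_alg_deg[of "{..<k + e}" n ?h] by (intro antisym alg_deg_le) auto
qed

theorem theorem5:
  fixes m n :: nat and f :: bfun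
  assumes "m \<ge> 2"
    and "2 ^ m \<le> n" and "n < 2 ^ m + 2 ^ (m - 1) - 1"
    and "symmetric_bf n f"
  shows "alg_immunity n f \<le> 2 ^ (m - 1) - 1 \<or>
         alg_deg n (\<lambda>x. esym (n - 2 ^ m + 1) x \<and> f x) = 2 ^ (m - 1) + (n - 2 ^ m + 1)"
proof -
  define k :: nat where "k = 2 ^ (m - 1)"
  define e where "e = n - 2 ^ m + 1"
  have "2 ^ m = 2 * k" using assms(1) by (simp add: k_def flip: power_Suc)
  hence n: "n = 2 * k + e - 1" and e: "e < k" using assms(2,3) unfolding e_def k_def by auto
  show ?thesis
  proof (cases "\<exists>w. e \<le> w \<and> w < k \<and> f {..<w} = f {..<w + k}")
    case True
    then obtain w where "e \<le> w" "w < k" "f {..<w} = f {..<w + k}" by blast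
    hence "alg_immunity n f \<le> k - 1"
      using alg_immunity_le_if_profile_repeats[OF assms(4)] n unfolding k_def by auto
    thus ?thesis unfolding k_def by simp
  next
    case False
    hence "alg_deg n (\<lambda>x. esym e x \<and> f x) = k + e"
      using alg_deg_esym_alternating[OF assms(4) k_def e n] by blast
    thus ?thesis unfolding e_def k_def by simp
  qed
qed

end
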